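(* For all integers $1\leq k\leq n$, $$\mathrm{ex}(K_{n,n,n,n},kK_3)\geq 4n^2+(k-1)n.$$
   Context: For graphs $G,H$, $\mathrm{ex}(G,H)$ is the maximum number of edges of a subgraph of $G$ containing no copy of $H$. $K_{n,n,n,n}$ is the complete $4$-partite graph with all parts of size $n$, and $kK_3$ denotes $k$ vertex-disjoint triangles. *)

theory Defs
  imports Main
begin

text \<open>A (simple) graph is represented by its edge set: a set of 2-element vertex sets.
  A copy of H in G is an injective map on the vertices of H sending edges of H to edges of G.\<close>

definition has_copy :: "'a set set \<Rightarrow> 'b set set \<Rightarrow> bool" where
  "has_copy G H \<longleftrightarrow> (\<exists>f. inj_on f (\<Union>H) \<and> (\<forall>e\<in>H. f ` e \<in> G))"

definition ex :: "'a set set \<Rightarrow> 'b set set \<Rightarrow> nat" where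
  "ex G H = Max {card F | F. F \<subseteq> G \<and> \<not> has_copy F H}"

definition K4part :: "nat \<Rightarrow> (nat \<times> nat) set set" where
  "K4part n = {{(i,a),(j,b)} | i j a b. i < 4 \<and> j < 4 \<and> a < n \<and> b < n \<and> i \<noteq> j}"

definition kK3 :: "nat \<Rightarrow> (nat \<times> nat) set set" where
  "kK3 k = {{(t,a),(t,b)} | t a b. t < k \<and> a < 3 \<and> b < 3 \<and> a \<noteq> b}"

end

theory Submission
  imports Defs
begin

text \<open>Join parts 0 and 1 completely to parts 2 and 3 (a complete bipartite graph with
  4n^2 edges), and add all edges between the first k - 1 vertices of part 0 and part 1.
  Every triangle has two vertices on the same side of the bipartition, hence an edge inside
  parts 0 and 1, hence one of the k - 1 extra vertices; so k vertex-disjoint triangles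
  would need k distinct such vertices.\<close>

lemma card_le_ex:
  assumes "finite G" and "F \<subseteq> G" and "\<not> has_copy F H"
  shows "card F \<le> ex G H"
proof -
  have "{card F | F. F \<subseteq> G \<and> \<not> has_copy F H} \<subseteq> card ` Pow G"
    by auto
  then have "finite {card F | F. F \<subseteq> G \<and> \<not> has_copy F H}"
    by (rule finite_subset) (simp add: assms(1))
  then show ?thesis
    unfolding ex_def using assms(2,3) by (intro Max_ge) blast+
qed

lemma vertex_in_kK3:
  assumes "t < k" and "a < 3"
  shows "(t, a) \<in> \<Union>(kK3 k)"
proof -
  define b :: nat where "b = (if a = 0 then 1 else 0)"
  have "a \<noteq> b" "b < 3"
    by (auto simp: b_def)
  then have "{(t, a), (t, b)} \<in> kK3 k"
    unfolding kK3_def using assms by blast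
  then show ?thesis by blast
qed

lemma no_kK3_if_triangle_transversal:
  assumes triangle_hits: "\<And>x y z. {x, y} \<in> F \<Longrightarrow> {x, z} \<in> F \<Longrightarrow> {y, z} \<in> F \<Longrightarrow>
      {x, y, z} \<inter> X \<noteq> {}"
    and "finite X" and "card X < k"
  shows "\<not> has_copy F (kK3 k)"
proof
  assume "has_copy F (kK3 k)"
  then obtain f where inj: "inj_on f (\<Union>(kK3 k))" and hom: "\<forall>e\<in>kK3 k. f ` e \<in> F"
    unfolding has_copy_def by blast
  have edge: "{f (t, a), f (t, b)} \<in> F" if "t < k" "a < 3" "b < 3" "a \<noteq> b" for t a b
  proof -
    have "{(t, a), (t, b)} \<in> kK3 k"
      unfolding kK3_def using that by blast
    then show ?thesis using hom by force
  qed
  have "\<forall>t<k. \<exists>a<3. f (t, a) \<in> X"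
  proof (intro allI impI)
    fix t assume "t < k"
    then have "{f (t, 0), f (t, 1), f (t, 2)} \<inter> X \<noteq> {}"
      by (intro triangle_hits edge) auto
    then show "\<exists>a<3. f (t, a) \<in> X" by force
  qed
  then obtain a where a: "\<And>t. t < k \<Longrightarrow> a t < 3 \<and> f (t, a t) \<in> X"
    by metis
  have "inj_on (\<lambda>t. f (t, a t)) {..<k}"
  proof (rule inj_onI)
    fix s t assume "s \<in> {..<k}" "t \<in> {..<k}" and eq: "f (s, a s) = f (t, a t)"
    then have "(s, a s) \<in> \<Union>(kK3 k)" "(t, a t) \<in> \<Union>(kK3 k)"
      using a vertex_in_kK3 by auto
    with eq have "(s, a s) = (t, a t)"
      by (rule inj_onD[OF inj])
    then show "s = t" by simp
  qed
  moreover have "(\<lambda>t. f (t, a t)) ` {..<k} \<subseteq> X"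
    using a by auto
  ultimately have "card {..<k} \<le> card X"
    using \<open>finite X\<close> by (rule card_inj_on_le)
  with \<open>card X < k\<close> show False by simp
qed

lemma card_image_ordered_pairs:
  fixes h :: "'a \<Rightarrow> 'b::linorder"
  assumes "\<And>u v. (u, v) \<in> P \<Longrightarrow> h u < h v"
  shows "card ((\<lambda>(u, v). {u, v}) ` P) = card P"
proof (rule card_image, rule inj_onI, clarify)
  fix u v u' v' assume "(u, v) \<in> P" "(u', v') \<in> P" "{u, v} = {u', v'}"
  with assms[of u v] assms[of u' v'] show "u = u' \<and> v = v'"
    by (auto simp: doubleton_eq_iff)
qed

lemma finite_K4part: "finite (K4part n)"
proof -
  have "K4part n \<subseteq> (\<lambda>(u, v). {u, v}) ` (({..<4} \<times> {..<n}) \<times> ({..<4} \<times> {..<n}))"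
    unfolding K4part_def by auto
  then show ?thesis by (rule finite_subset) auto
qed

definition hub :: "nat \<Rightarrow> (nat \<times> nat) set" where
  "hub k = {0} \<times> {..<k - 1}"

definition extremal_pairs :: "nat \<Rightarrow> nat \<Rightarrow> ((nat \<times> nat) \<times> (nat \<times> nat)) set" where
  "extremal_pairs n k =
     (({0, 1} \<times> {..<n}) \<times> ({2, 3} \<times> {..<n})) \<union> (hub k \<times> ({1} \<times> {..<n}))"

definition extremal_graph :: "nat \<Rightarrow> nat \<Rightarrow> (nat \<times> nat) set set" where
  "extremal_graph n k = (\<lambda>(u, v). {u, v}) ` extremal_pairs n k"

lemma card_extremal_graph: "card (extremal_graph n k) = 4 * n^2 + (k - 1) * n"
proof -
  have "card (extremal_graph n k) = card (extremal_pairs n k)"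
    unfolding extremal_graph_def
    by (rule card_image_ordered_pairs[where h = fst]) (auto simp: extremal_pairs_def hub_def)
  also have "\<dots> = card (({0::nat, 1} \<times> {..<n}) \<times> ({2::nat, 3} \<times> {..<n}))
                    + card (hub k \<times> ({1::nat} \<times> {..<n}))"
    unfolding extremal_pairs_def by (subst card_Un_disjoint) (auto simp: hub_def)
  also have "\<dots> = 4 * n^2 + (k - 1) * n"
    by (simp add: hub_def card_cartesian_product power2_eq_square algebra_simps)
  finally show ?thesis .
qed

lemma extremal_graph_subset_K4part:
  assumes "k \<le> n"
  shows "extremal_graph n k \<subseteq> K4part n"
proof -
  have "{(i, a), (j, b)} \<in> K4part n" if "i < 4" "j < 4" "a < n" "b < n" "i \<noteq> j" for i j a b
    unfolding K4part_def using that by blast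
  with assms show ?thesis
    unfolding extremal_graph_def extremal_pairs_def hub_def by auto
qed

lemma extremal_graph_edge_within_side:
  assumes "{x, y} \<in> extremal_graph n k" and "(fst x < 2) = (fst y < 2)"
  shows "x \<in> hub k \<or> y \<in> hub k"
proof -
  obtain u v where uv: "{x, y} = {u, v}" "(u, v) \<in> extremal_pairs n k"
    using assms(1) unfolding extremal_graph_def by auto
  then have "(fst u < 2) = (fst v < 2)"
    using assms(2) by (auto simp: doubleton_eq_iff)
  with uv(2) have "u \<in> hub k"
    unfolding extremal_pairs_def by auto
  with uv(1) show ?thesis by (auto simp: doubleton_eq_iff)
qed

lemma extremal_graph_triangle_meets_hub:
  assumes "{x, y} \<in> extremal_graph n k" "{x, z} \<in> extremal_graph n k" "{y, z} \<in> extremal_graph n k"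
  shows "{x, y, z} \<inter> hub k \<noteq> {}"
proof -
  consider "(fst x < 2) = (fst y < 2)" | "(fst x < 2) = (fst z < 2)" | "(fst y < 2) = (fst z < 2)"
    by blast
  then show ?thesis
    using extremal_graph_edge_within_side assms by cases blast+
qed

lemma extremal_graph_no_kK3:
  assumes "1 \<le> k"
  shows "\<not> has_copy (extremal_graph n k) (kK3 k)"
proof (rule no_kK3_if_triangle_transversal)
  show "finite (hub k)" and "card (hub k) < k"
    using assms by (simp_all add: hub_def card_cartesian_product)
qed (rule extremal_graph_triangle_meets_hub)

theorem mainTheorem5:
  fixes n k :: nat
  assumes "1 \<le> k" and "k \<le> n"
  shows "ex (K4part n) (kK3 k) \<ge> 4 * n^2 + (k - 1) * n"
proof -
  have "card (extremal_graph n k) \<le> ex (K4part n) (kK3 k)"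
    using finite_K4part extremal_graph_subset_K4part[OF assms(2)] extremal_graph_no_kK3[OF assms(1)]
    by (rule card_le_ex)
  then show ?thesis
    by (simp add: card_extremal_graph)
qed

end
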